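(* Let $F:\mathbb{R}^n\rightrightarrows\mathbb{R}^n$ be continuous with $F(x)$ nonempty, compact and convex for all $x$, assume $\Sigma:\dot x\in F(x)$ is forward complete, and let $X_o,X_u\subset\mathbb{R}^n$ be such that $\Sigma$ is robustly safe with respect to $(X_o,X_u)$, with robust-safety margin $\bar\epsilon_o$. Then for each continuous $\bar\epsilon:\mathbb{R}^n\to\mathbb{R}_{>0}$ with $\bar\epsilon(x)<\bar\epsilon_o(x)$ for all $x$, the set $K_{\bar\epsilon}$ satisfies: (1) if $\mathrm{cl}(X_o)\cap\mathrm{cl}(X_u)=\emptyset$, then $\mathrm{cl}(X_u)\cap\mathrm{cl}(K_{\bar\epsilon})=\emptyset$; (2) if $\mathrm{cl}(X_o)\cap X_u=\emptyset$, then $X_u\cap\mathrm{cl}(K_{\bar\epsilon})=\emptyset$.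
   Context: $\mathbb{B}$ is the closed unit ball. Continuity of a set-valued map means upper and lower semicontinuity. Solutions of a differential inclusion are locally absolutely continuous functions on an interval containing $0$ satisfying the inclusion a.e.; maximal solutions are non-extendable; $\mathcal{S}_{\Sigma'}(x)$ is the set of maximal solutions of $\Sigma'$ with $\phi(0)=x$. Forward complete: every maximal solution is defined on an interval unbounded to the right. $\Sigma_\epsilon$: $\dot x\in F(x)+\epsilon(x)\mathbb{B}$. $\Sigma'$ is safe with respect to $(X_o,X_u)$ if every solution starting in $X_o$ never enters $X_u$. $\Sigma$ is robustly safe with respect to $(X_o,X_u)$ if there is a continuous $\epsilon:\mathbb{R}^n\to\mathbb{R}_{>0}$ (a robust-safety margin) such that $\Sigma_\epsilon$ is safe with respect to $(X_o,X_u)$. For $t\ge0$, $R_{\Sigma'}(t,x):=\{\phi(s):\phi\in\mathcal{S}_{\Sigma'}(x),\ s\in\mathrm{dom}\,\phi\cap[0,t]\}$, and $K_{\bar\epsilon}:=\bigcup_{t\ge0}\bigcup_{x\in X_o}R_{\Sigma_{\bar\epsilon}}(t,x)$. *)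

theory Defs
  imports "HOL-Analysis.Analysis"
begin

definition usc_at :: "('a::metric_space \<Rightarrow> 'b::topological_space set) \<Rightarrow> 'a \<Rightarrow> bool" where
  "usc_at F x \<longleftrightarrow> (\<forall>U. open U \<and> F x \<subseteq> U \<longrightarrow> (\<exists>\<delta>>0. \<forall>y\<in>ball x \<delta>. F y \<subseteq> U))"

definition lsc_at :: "('a::metric_space \<Rightarrow> 'b::topological_space set) \<Rightarrow> 'a \<Rightarrow> bool" where
  "lsc_at F x \<longleftrightarrow> (\<forall>U. open U \<and> F x \<inter> U \<noteq> {} \<longrightarrow> (\<exists>\<delta>>0. \<forall>y\<in>ball x \<delta>. F y \<inter> U \<noteq> {}))"

definition setvalued_continuous :: "('a::metric_space \<Rightarrow> 'b::topological_space set) \<Rightarrow> bool" where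
  "setvalued_continuous F \<longleftrightarrow> (\<forall>x. usc_at F x \<and> lsc_at F x)"

definition inflate :: "('a::real_normed_vector \<Rightarrow> 'a set) \<Rightarrow> ('a \<Rightarrow> real) \<Rightarrow> 'a \<Rightarrow> 'a set" where
  "inflate F eps x = {y + eps x *\<^sub>R b | y b. y \<in> F x \<and> b \<in> cball 0 1}"

definition abs_continuous_on :: "real set \<Rightarrow> (real \<Rightarrow> 'a::real_normed_vector) \<Rightarrow> bool" where
  "abs_continuous_on S f \<longleftrightarrow>
    (\<forall>e>0. \<exists>d>0. \<forall>(n::nat) (a::nat \<Rightarrow> real) b.
        (\<forall>i<n. a i \<le> b i \<and> {a i..b i} \<subseteq> S) \<and>
        (\<forall>i<n. \<forall>j<n. i \<noteq> j \<longrightarrow> b i \<le> a j \<or> b j \<le> a i) \<and>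
        (\<Sum>i<n. b i - a i) < d
        \<longrightarrow> (\<Sum>i<n. norm (f (b i) - f (a i))) < e)"

definition loc_abs_continuous_on :: "real set \<Rightarrow> (real \<Rightarrow> 'a::real_normed_vector) \<Rightarrow> bool" where
  "loc_abs_continuous_on I f \<longleftrightarrow> (\<forall>a b. {a..b} \<subseteq> I \<longrightarrow> abs_continuous_on {a..b} f)"

definition is_solution :: "('a::euclidean_space \<Rightarrow> 'a set) \<Rightarrow> real set \<Rightarrow> (real \<Rightarrow> 'a) \<Rightarrow> bool" where
  "is_solution F I \<phi> \<longleftrightarrow>
    is_interval I \<and> 0 \<in> I \<and> loc_abs_continuous_on I \<phi> \<and>
    (\<exists>N \<in> null_sets lebesgue. \<forall>t \<in> I - N.
        \<exists>v. (\<phi> has_vector_derivative v) (at t within I) \<and> v \<in> F (\<phi> t))"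

definition is_maximal_solution :: "('a::euclidean_space \<Rightarrow> 'a set) \<Rightarrow> real set \<Rightarrow> (real \<Rightarrow> 'a) \<Rightarrow> bool" where
  "is_maximal_solution F I \<phi> \<longleftrightarrow>
    is_solution F I \<phi> \<and>
    \<not> (\<exists>J \<psi>. is_solution F J \<psi> \<and> I \<subset> J \<and> (\<forall>t\<in>I. \<psi> t = \<phi> t))"

definition forward_complete :: "('a::euclidean_space \<Rightarrow> 'a set) \<Rightarrow> bool" where
  "forward_complete F \<longleftrightarrow> (\<forall>I \<phi>. is_maximal_solution F I \<phi> \<longrightarrow> \<not> bdd_above I)"

definition safe :: "('a::euclidean_space \<Rightarrow> 'a set) \<Rightarrow> 'a set \<Rightarrow> 'a set \<Rightarrow> bool" where
  "safe F Xo Xu \<longleftrightarrow>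
    (\<forall>I \<phi>. is_solution F I \<phi> \<and> \<phi> 0 \<in> Xo \<longrightarrow> (\<forall>t\<in>I. t \<ge> 0 \<longrightarrow> \<phi> t \<notin> Xu))"

definition robust_safety_margin :: "('a::euclidean_space \<Rightarrow> 'a set) \<Rightarrow> 'a set \<Rightarrow> 'a set \<Rightarrow> ('a \<Rightarrow> real) \<Rightarrow> bool" where
  "robust_safety_margin F Xo Xu eps \<longleftrightarrow>
    continuous_on UNIV eps \<and> (\<forall>x. eps x > 0) \<and> safe (inflate F eps) Xo Xu"

definition robustly_safe :: "('a::euclidean_space \<Rightarrow> 'a set) \<Rightarrow> 'a set \<Rightarrow> 'a set \<Rightarrow> bool" where
  "robustly_safe F Xo Xu \<longleftrightarrow> (\<exists>eps. robust_safety_margin F Xo Xu eps)"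

definition reach :: "('a::euclidean_space \<Rightarrow> 'a set) \<Rightarrow> real \<Rightarrow> 'a \<Rightarrow> 'a set" where
  "reach F t x = {\<phi> s | I \<phi> s. is_maximal_solution F I \<phi> \<and> \<phi> 0 = x \<and> s \<in> I \<inter> {0..t}}"

definition Kset :: "('a::euclidean_space \<Rightarrow> 'a set) \<Rightarrow> ('a \<Rightarrow> real) \<Rightarrow> 'a set \<Rightarrow> 'a set" where
  "Kset F eps Xo = (\<Union>t\<in>{0..}. \<Union>x\<in>Xo. reach (inflate F eps) t x)"

end

theory Submission
  imports Defs
begin

text \<open>
  Suppose \<open>y \<notin> cl X\<^sub>o\<close> lies in both \<open>cl K\<close> and \<open>cl X\<^sub>u\<close>, and pick \<open>z \<in> K\<close> and \<open>y' \<in> X\<^sub>u\<close> close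
  to \<open>y\<close>. The solution of \<open>\<Sigma>\<^sub>\<epsilon>\<close> reaching \<open>z\<close> starts in \<open>X\<^sub>o\<close>, outside a ball \<open>B(y, R)\<close>, and has
  velocity bounded by some \<open>M\<close> inside it, so it spends a time of at least about \<open>R/M\<close> in
  \<open>B(y, R)\<close> just before reaching \<open>z\<close>. On that final time interval add to it the linear
  ramp from \<open>0\<close> to \<open>y' - z\<close>: its position changes little and its velocity by a small
  constant vector. Continuity of \<open>F\<close>, compactness of its values and the gap between \<open>\<epsilon>\<close> and
  \<open>\<epsilon>\<^sub>o\<close> near \<open>y\<close> absorb both changes, so the perturbed curve is a solution of
  \<open>\<Sigma>\<^sub>\<epsilon>\<^sub>o\<close> from \<open>X\<^sub>o\<close> to \<open>y' \<in> X\<^sub>u\<close>, contradicting robust safety. Hence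
  \<open>cl K \<inter> cl X\<^sub>u \<subseteq> cl X\<^sub>o\<close>, which gives both claims. The time estimate rests on the
  mean value inequality for absolutely continuous functions whose derivative is bounded
  almost everywhere, which follows from a gauge integral argument.
\<close>

section \<open>Absolute continuity\<close>

lemma abs_continuous_onE:
  assumes "abs_continuous_on S f" "(e::real) > 0"
  obtains d where "d > 0"
    "\<And>(n::nat) a b. \<forall>i<n. a i \<le> b i \<and> {a i..b i} \<subseteq> S \<Longrightarrow>
       \<forall>i<n. \<forall>j<n. i \<noteq> j \<longrightarrow> b i \<le> a j \<or> b j \<le> a i \<Longrightarrow>
       (\<Sum>i<n. b i - a i) < d \<Longrightarrow> (\<Sum>i<n. norm (f (b i) - f (a i))) < e"
proof -
  from assms(1)[unfolded abs_continuous_on_def, rule_format, OF assms(2)]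
  obtain d where "d > 0" and d: "\<forall>(n::nat) a b. (\<forall>i<n. a i \<le> b i \<and> {a i..b i} \<subseteq> S) \<and>
        (\<forall>i<n. \<forall>j<n. i \<noteq> j \<longrightarrow> b i \<le> a j \<or> b j \<le> a i) \<and> (\<Sum>i<n. b i - a i) < d
        \<longrightarrow> (\<Sum>i<n. norm (f (b i) - f (a i))) < e"
    by (elim exE conjE)
  show ?thesis by (rule that[OF \<open>d > 0\<close>]) (use d in blast)
qed

lemma abs_continuous_on_finite_family:
  fixes f :: "real \<Rightarrow> 'a::real_normed_vector"
  assumes "abs_continuous_on S f" "(e::real) > 0"
  obtains d where "d > 0"
    "\<And>(I :: 'i set) p q. finite I \<Longrightarrow> \<forall>i\<in>I. p i \<le> q i \<and> {p i..q i} \<subseteq> S \<Longrightarrow>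
       \<forall>i\<in>I. \<forall>j\<in>I. i \<noteq> j \<longrightarrow> q i \<le> p j \<or> q j \<le> p i \<Longrightarrow>
       (\<Sum>i\<in>I. q i - p i) < d \<Longrightarrow> (\<Sum>i\<in>I. norm (f (q i) - f (p i))) < e"
proof -
  obtain d where "d > 0" and d: "\<And>(n::nat) a b. \<forall>i<n. a i \<le> b i \<and> {a i..b i} \<subseteq> S \<Longrightarrow>
       \<forall>i<n. \<forall>j<n. i \<noteq> j \<longrightarrow> b i \<le> a j \<or> b j \<le> a i \<Longrightarrow>
       (\<Sum>i<n. b i - a i) < d \<Longrightarrow> (\<Sum>i<n. norm (f (b i) - f (a i))) < e"
    using abs_continuous_onE[OF assms] by blast
  show ?thesis
  proof (rule that[OF \<open>d > 0\<close>])
    fix I :: "'i set" and p q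
    assume "finite I" and intervals: "\<forall>i\<in>I. p i \<le> q i \<and> {p i..q i} \<subseteq> S"
      and nonoverlapping: "\<forall>i\<in>I. \<forall>j\<in>I. i \<noteq> j \<longrightarrow> q i \<le> p j \<or> q j \<le> p i"
      and small: "(\<Sum>i\<in>I. q i - p i) < d"
    obtain h where h: "bij_betw h {..<card I} I"
      using ex_bij_betw_nat_finite[OF \<open>finite I\<close>] by (auto simp: atLeast0LessThan)
    have reindex: "(\<Sum>i<card I. g (h i)) = (\<Sum>i\<in>I. g i)" for g :: "'i \<Rightarrow> real"
      using sum.reindex_bij_betw[OF h] .
    have hI: "h i \<in> I" if "i < card I" for i
      using h that by (auto dest: bij_betwE)
    have "(\<Sum>i<card I. norm (f (q (h i)) - f (p (h i)))) < e"
    proof (rule d)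
      show "\<forall>i<card I. p (h i) \<le> q (h i) \<and> {p (h i)..q (h i)} \<subseteq> S"
        using intervals hI by auto
      show "\<forall>i<card I. \<forall>j<card I. i \<noteq> j \<longrightarrow> q (h i) \<le> p (h j) \<or> q (h j) \<le> p (h i)"
      proof (intro allI impI)
        fix i j assume "i < card I" "j < card I" "i \<noteq> j"
        moreover have "h i \<noteq> h j"
          using h calculation unfolding bij_betw_def inj_on_def by auto
        ultimately show "q (h i) \<le> p (h j) \<or> q (h j) \<le> p (h i)"
          using nonoverlapping hI by blast
      qed
      show "(\<Sum>i<card I. q (h i) - p (h i)) < d"
        using small reindex[of "\<lambda>i. q i - p i"] by simp
    qed
    then show "(\<Sum>i\<in>I. norm (f (q i) - f (p i))) < e"
      using reindex[of "\<lambda>i. norm (f (q i) - f (p i))"] by simp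
  qed
qed

lemma lipschitz_on_imp_abs_continuous_on:
  fixes f :: "real \<Rightarrow> 'a::real_normed_vector"
  assumes "L-lipschitz_on S f"
  shows "abs_continuous_on S f"
  unfolding abs_continuous_on_def
proof (intro allI impI exI conjI)
  fix e :: real assume "e > 0"
  have "L \<ge> 0" using assms by (rule lipschitz_on_nonneg)
  then show "e / (L + 1) > 0" using \<open>e > 0\<close> by simp
  fix n :: nat and a b :: "nat \<Rightarrow> real"
  assume H: "(\<forall>i<n. a i \<le> b i \<and> {a i..b i} \<subseteq> S) \<and>
    (\<forall>i<n. \<forall>j<n. i \<noteq> j \<longrightarrow> b i \<le> a j \<or> b j \<le> a i) \<and> (\<Sum>i<n. b i - a i) < e / (L + 1)"
  have "(\<Sum>i<n. norm (f (b i) - f (a i))) \<le> (\<Sum>i<n. L * (b i - a i))"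
  proof (rule sum_mono)
    fix i assume "i \<in> {..<n}"
    then have "a i \<le> b i" "{a i..b i} \<subseteq> S" using H by auto
    then have "a i \<le> b i" "a i \<in> S" "b i \<in> S" by auto
    then show "norm (f (b i) - f (a i)) \<le> L * (b i - a i)"
      using lipschitz_onD[OF assms, of "b i" "a i"] by (simp add: dist_norm dist_real_def)
  qed
  also have "\<dots> = L * (\<Sum>i<n. b i - a i)" by (simp add: sum_distrib_left)
  also have "\<dots> \<le> L * (e / (L + 1))" using H \<open>L \<ge> 0\<close> by (intro mult_left_mono) auto
  also have "\<dots> < e" using \<open>L \<ge> 0\<close> \<open>e > 0\<close> by (simp add: field_simps)
  finally show "(\<Sum>i<n. norm (f (b i) - f (a i))) < e" .
qed

lemma abs_continuous_on_add:
  fixes f g :: "real \<Rightarrow> 'a::real_normed_vector"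
  assumes "abs_continuous_on S f" "abs_continuous_on S g"
  shows "abs_continuous_on S (\<lambda>t. f t + g t)"
  unfolding abs_continuous_on_def
proof (intro allI impI)
  fix e :: real assume "e > 0"
  obtain d1 where "d1 > 0" and d1: "\<And>(n::nat) a b. \<forall>i<n. a i \<le> b i \<and> {a i..b i} \<subseteq> S \<Longrightarrow>
       \<forall>i<n. \<forall>j<n. i \<noteq> j \<longrightarrow> b i \<le> a j \<or> b j \<le> a i \<Longrightarrow>
       (\<Sum>i<n. b i - a i) < d1 \<Longrightarrow> (\<Sum>i<n. norm (f (b i) - f (a i))) < e/2"
    using abs_continuous_onE[OF assms(1) half_gt_zero[OF \<open>e > 0\<close>]] by blast
  obtain d2 where "d2 > 0" and d2: "\<And>(n::nat) a b. \<forall>i<n. a i \<le> b i \<and> {a i..b i} \<subseteq> S \<Longrightarrow>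
       \<forall>i<n. \<forall>j<n. i \<noteq> j \<longrightarrow> b i \<le> a j \<or> b j \<le> a i \<Longrightarrow>
       (\<Sum>i<n. b i - a i) < d2 \<Longrightarrow> (\<Sum>i<n. norm (g (b i) - g (a i))) < e/2"
    using abs_continuous_onE[OF assms(2) half_gt_zero[OF \<open>e > 0\<close>]] by blast
  show "\<exists>d>0. \<forall>(n::nat) a b. (\<forall>i<n. a i \<le> b i \<and> {a i..b i} \<subseteq> S) \<and>
        (\<forall>i<n. \<forall>j<n. i \<noteq> j \<longrightarrow> b i \<le> a j \<or> b j \<le> a i) \<and> (\<Sum>i<n. b i - a i) < d
        \<longrightarrow> (\<Sum>i<n. norm (f (b i) + g (b i) - (f (a i) + g (a i)))) < e"
  proof (intro exI[of _ "min d1 d2"] conjI allI impI)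
    show "min d1 d2 > 0" using \<open>d1 > 0\<close> \<open>d2 > 0\<close> by simp
    fix n :: nat and a b :: "nat \<Rightarrow> real"
    assume H: "(\<forall>i<n. a i \<le> b i \<and> {a i..b i} \<subseteq> S) \<and>
        (\<forall>i<n. \<forall>j<n. i \<noteq> j \<longrightarrow> b i \<le> a j \<or> b j \<le> a i) \<and> (\<Sum>i<n. b i - a i) < min d1 d2"
    have "(\<Sum>i<n. norm (f (b i) + g (b i) - (f (a i) + g (a i)))) \<le>
          (\<Sum>i<n. norm (f (b i) - f (a i)) + norm (g (b i) - g (a i)))"
      by (rule sum_mono) (simp add: add_diff_add norm_triangle_ineq)
    also have "\<dots> = (\<Sum>i<n. norm (f (b i) - f (a i))) + (\<Sum>i<n. norm (g (b i) - g (a i)))"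
      by (simp add: sum.distrib)
    also have "\<dots> < e/2 + e/2"
      using H by (intro add_strict_mono d1 d2) auto
    finally show "(\<Sum>i<n. norm (f (b i) + g (b i) - (f (a i) + g (a i)))) < e" by simp
  qed
qed

lemma abs_continuous_on_imp_continuous_on:
  fixes f :: "real \<Rightarrow> 'a::real_normed_vector"
  assumes "abs_continuous_on {a..b} f"
  shows "continuous_on {a..b} f"
  unfolding continuous_on_iff
proof (intro ballI allI impI)
  fix x e assume x: "x \<in> {a..b}" and "(e::real) > 0"
  obtain d where "d > 0" and d: "\<And>(n::nat) a' b'. \<forall>i<n. a' i \<le> b' i \<and> {a' i..b' i} \<subseteq> {a..b} \<Longrightarrow>
       \<forall>i<n. \<forall>j<n. i \<noteq> j \<longrightarrow> b' i \<le> a' j \<or> b' j \<le> a' i \<Longrightarrow>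
       (\<Sum>i<n. b' i - a' i) < d \<Longrightarrow> (\<Sum>i<n. norm (f (b' i) - f (a' i))) < e"
    using abs_continuous_onE[OF assms \<open>e > 0\<close>] by blast
  show "\<exists>d>0. \<forall>x'\<in>{a..b}. dist x' x < d \<longrightarrow> dist (f x') (f x) < e"
  proof (intro exI[of _ d] conjI ballI impI \<open>d > 0\<close>)
    fix x' assume "x' \<in> {a..b}" and "dist x' x < d"
    then have "norm (f (max x x') - f (min x x')) < e"
      using x d[of 1 "\<lambda>_. min x x'" "\<lambda>_. max x x'"] by (simp add: dist_real_def)
    then show "dist (f x') (f x) < e"
      by (cases "x \<le> x'") (auto simp: dist_norm norm_minus_commute max_def min_def)
  qed
qed

lemma tagged_division_of_real_memE:
  fixes a b :: real
  assumes "D tagged_division_of {a..b}" "(t, K) \<in> D"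
  obtains p q where "K = {p..q}" "p \<le> t" "t \<le> q" "{p..q} \<subseteq> {a..b}"
proof -
  obtain p q where "K = cbox p q" using tagged_division_ofD(4)[OF assms] by blast
  moreover have "t \<in> K" "K \<subseteq> {a..b}" using tagged_division_ofD(2,3)[OF assms] by auto
  ultimately show ?thesis using that[of p q] by auto
qed

lemma tagged_division_of_real_nonoverlapping:
  fixes a b :: real
  assumes D: "D tagged_division_of {a..b}" and "(t, K) \<in> D" "(t', K') \<in> D" "(t, K) \<noteq> (t', K')"
    and "Inf K < Sup K" "Inf K' < Sup K'"
  shows "Sup K \<le> Inf K' \<or> Sup K' \<le> Inf K"
proof (rule ccontr)
  assume overlap: "\<not> ?thesis"
  obtain p q where "K = {p..q}" "p \<le> q"
    using tagged_division_of_real_memE[OF D \<open>(t, K) \<in> D\<close>] by (metis order_trans)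
  moreover obtain p' q' where "K' = {p'..q'}" "p' \<le> q'"
    using tagged_division_of_real_memE[OF D \<open>(t', K') \<in> D\<close>] by (metis order_trans)
  ultimately have "(max p p' + min q q') / 2 \<in> interior K \<inter> interior K'"
    using overlap \<open>Inf K < Sup K\<close> \<open>Inf K' < Sup K'\<close> by (auto simp: max_def min_def)
  then show False
    using tagged_division_ofD(5)[OF D \<open>(t, K) \<in> D\<close> \<open>(t', K') \<in> D\<close> \<open>(t, K) \<noteq> (t', K')\<close>] by blast
qed

lemma abs_continuous_on_tagged_division_sum:
  fixes \<phi> :: "real \<Rightarrow> 'a::real_normed_vector"
  assumes "abs_continuous_on {a..b} \<phi>" "(e::real) > 0"
  obtains d where "d > 0"
    "\<And>D E. D tagged_division_of {a..b} \<Longrightarrow> E \<subseteq> D \<Longrightarrow> (\<Sum>(t,K)\<in>E. Sup K - Inf K) < d \<Longrightarrow>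
       (\<Sum>(t,K)\<in>E. norm (\<phi> (Sup K) - \<phi> (Inf K))) < e"
proof -
  obtain d where "d > 0" and d: "\<And>(I :: (real \<times> real set) set) p q. finite I \<Longrightarrow>
       \<forall>i\<in>I. p i \<le> q i \<and> {p i..q i} \<subseteq> {a..b} \<Longrightarrow>
       \<forall>i\<in>I. \<forall>j\<in>I. i \<noteq> j \<longrightarrow> q i \<le> p j \<or> q j \<le> p i \<Longrightarrow>
       (\<Sum>i\<in>I. q i - p i) < d \<Longrightarrow> (\<Sum>i\<in>I. norm (\<phi> (q i) - \<phi> (p i))) < e"
    by (rule abs_continuous_on_finite_family[OF assms]) (rule that)
  show ?thesis
  proof (rule that[OF \<open>d > 0\<close>])
    fix D E assume D: "D tagged_division_of {a..b}" and "E \<subseteq> D"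
      and small: "(\<Sum>(t,K)\<in>E. Sup K - Inf K) < d"
    have "finite E" using \<open>E \<subseteq> D\<close> D by (meson finite_subset tagged_division_of_finite)
    define p where "p tK = Inf (snd tK)" for tK :: "real \<times> real set"
    define q where "q tK = Sup (snd tK)" for tK :: "real \<times> real set"
    have bounds: "snd tK = {p tK..q tK} \<and> p tK \<le> q tK \<and> {p tK..q tK} \<subseteq> {a..b}" if "tK \<in> E" for tK
    proof -
      have "(fst tK, snd tK) \<in> D" using that \<open>E \<subseteq> D\<close> by auto
      then obtain u v where "snd tK = {u..v}" "u \<le> fst tK" "fst tK \<le> v" "{u..v} \<subseteq> {a..b}"
        by (rule tagged_division_of_real_memE[OF D])
      then show ?thesis unfolding p_def q_def by auto
    qed
    define E' where "E' = {tK \<in> E. p tK < q tK}"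
    have "E' \<subseteq> E" unfolding E'_def by blast
    have degenerate: "q tK = p tK" if "tK \<in> E - E'" for tK
    proof -
      have "p tK \<le> q tK" using bounds that by blast
      then show ?thesis using that unfolding E'_def by simp
    qed
    have sum_E': "(\<Sum>tK\<in>E'. g (p tK) (q tK)) = (\<Sum>(t,K)\<in>E. g (Inf K) (Sup K))"
      if "\<And>x. g x x = 0" for g :: "real \<Rightarrow> real \<Rightarrow> real"
    proof -
      have "(\<Sum>tK\<in>E'. g (p tK) (q tK)) = (\<Sum>tK\<in>E. g (p tK) (q tK))"
        using \<open>finite E\<close> \<open>E' \<subseteq> E\<close> degenerate that by (intro sum.mono_neutral_left) auto
      then show ?thesis by (simp add: split_beta p_def q_def)
    qed
    have "(\<Sum>tK\<in>E'. norm (\<phi> (q tK) - \<phi> (p tK))) < e"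
    proof (rule d)
      show "finite E'" unfolding E'_def using \<open>finite E\<close> by simp
      show "\<forall>tK\<in>E'. p tK \<le> q tK \<and> {p tK..q tK} \<subseteq> {a..b}"
        using bounds unfolding E'_def by blast
      show "\<forall>i\<in>E'. \<forall>j\<in>E'. i \<noteq> j \<longrightarrow> q i \<le> p j \<or> q j \<le> p i"
      proof (intro ballI impI)
        fix i j assume "i \<in> E'" "j \<in> E'" "i \<noteq> j"
        then show "q i \<le> p j \<or> q j \<le> p i"
          using tagged_division_of_real_nonoverlapping[OF D, of "fst i" "snd i" "fst j" "snd j"]
            \<open>E' \<subseteq> E\<close> \<open>E \<subseteq> D\<close> unfolding E'_def p_def q_def by auto
      qed
      have "(\<Sum>tK\<in>E'. q tK - p tK) = (\<Sum>(t,K)\<in>E. Sup K - Inf K)"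
        using sum_E'[of "\<lambda>x y. y - x"] by simp
      then show "(\<Sum>tK\<in>E'. q tK - p tK) < d" using small by simp
    qed
    moreover have "(\<Sum>tK\<in>E'. norm (\<phi> (q tK) - \<phi> (p tK))) = (\<Sum>(t,K)\<in>E. norm (\<phi> (Sup K) - \<phi> (Inf K)))"
      using sum_E'[of "\<lambda>x y. norm (\<phi> y - \<phi> x)"] by simp
    ultimately show "(\<Sum>(t,K)\<in>E. norm (\<phi> (Sup K) - \<phi> (Inf K))) < e" by simp
  qed
qed

lemma has_vector_derivative_straddle:
  fixes \<phi> :: "real \<Rightarrow> 'a::real_normed_vector"
  assumes "(\<phi> has_vector_derivative v) (at t within S)" "norm v \<le> M" "(e::real) > 0"
  shows "\<exists>r>0. \<forall>u\<in>S. \<forall>w\<in>S. w \<le> t \<longrightarrow> t \<le> u \<longrightarrow> dist u t < r \<longrightarrow> dist w t < r \<longrightarrow>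
    norm (\<phi> u - \<phi> w) \<le> (M + e) * (u - w)"
proof -
  obtain r where "r > 0" and r: "\<forall>y\<in>S. norm (y - t) < r \<longrightarrow>
      norm (\<phi> y - \<phi> t - (y - t) *\<^sub>R v) \<le> e * norm (y - t)"
    using assms(1,3) unfolding has_vector_derivative_def has_derivative_within_alt by blast
  show ?thesis
  proof (intro exI[of _ r] conjI \<open>r > 0\<close> ballI impI)
    fix u w assume "u \<in> S" "w \<in> S" "w \<le> t" "t \<le> u" "dist u t < r" "dist w t < r"
    then have right: "norm (\<phi> u - \<phi> t - (u - t) *\<^sub>R v) \<le> e * (u - t)"
      and left: "norm (\<phi> w - \<phi> t - (w - t) *\<^sub>R v) \<le> e * (t - w)"
      using r by (auto simp: dist_real_def)
    have "\<phi> u - \<phi> w = (\<phi> u - \<phi> t - (u - t) *\<^sub>R v) - (\<phi> w - \<phi> t - (w - t) *\<^sub>R v) + (u - w) *\<^sub>R v"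
      by (simp add: algebra_simps)
    also have "norm \<dots> \<le> norm (\<phi> u - \<phi> t - (u - t) *\<^sub>R v) + norm (\<phi> w - \<phi> t - (w - t) *\<^sub>R v)
        + norm ((u - w) *\<^sub>R v)"
      by (intro order_trans[OF norm_triangle_ineq] add_right_mono norm_triangle_ineq4)
    also have "\<dots> \<le> e * (u - t) + e * (t - w) + (u - w) * M"
      using right left \<open>w \<le> t\<close> \<open>t \<le> u\<close> mult_left_mono[OF \<open>norm v \<le> M\<close>, of "u - w"] by simp
    finally show "norm (\<phi> u - \<phi> w) \<le> (M + e) * (u - w)"
      by (simp add: algebra_simps)
  qed
qed

lemma derivative_bound_fine_gauge:
  fixes \<phi> :: "real \<Rightarrow> 'a::real_normed_vector"
  assumes "(e::real) > 0"
    and der: "\<And>t. t \<in> {a..b} - N \<Longrightarrow> \<exists>v. (\<phi> has_vector_derivative v) (at t within {a..b}) \<and> norm v \<le> M"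
  obtains \<gamma> where "gauge \<gamma>"
    "\<And>D t K. D tagged_division_of {a..b} \<Longrightarrow> \<gamma> fine D \<Longrightarrow> (t, K) \<in> D \<Longrightarrow> t \<notin> N \<Longrightarrow>
       norm (\<phi> (Sup K) - \<phi> (Inf K)) \<le> (M + e) * (Sup K - Inf K)"
proof -
  have "\<exists>r>0. \<forall>u\<in>{a..b}. \<forall>w\<in>{a..b}. w \<le> t \<longrightarrow> t \<le> u \<longrightarrow> dist u t < r \<longrightarrow> dist w t < r \<longrightarrow>
      norm (\<phi> u - \<phi> w) \<le> (M + e) * (u - w)" if t: "t \<in> {a..b} - N" for t
  proof -
    obtain v where "(\<phi> has_vector_derivative v) (at t within {a..b})" "norm v \<le> M"
      using der[OF t] by blast
    then show ?thesis by (rule has_vector_derivative_straddle[OF _ _ \<open>e > 0\<close>])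
  qed
  then have "\<forall>t\<in>{a..b} - N. \<exists>r>0. \<forall>u\<in>{a..b}. \<forall>w\<in>{a..b}. w \<le> t \<longrightarrow> t \<le> u \<longrightarrow>
      dist u t < r \<longrightarrow> dist w t < r \<longrightarrow> norm (\<phi> u - \<phi> w) \<le> (M + e) * (u - w)"
    by blast
  then obtain r where r: "\<forall>t\<in>{a..b} - N. r t > 0 \<and> (\<forall>u\<in>{a..b}. \<forall>w\<in>{a..b}. w \<le> t \<longrightarrow> t \<le> u \<longrightarrow>
      dist u t < r t \<longrightarrow> dist w t < r t \<longrightarrow> norm (\<phi> u - \<phi> w) \<le> (M + e) * (u - w))"
    by (rule bchoice[THEN exE]) (rule that)
  define \<gamma> where "\<gamma> t = ball t (if t \<in> {a..b} - N then r t else 1)" for t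
  have "gauge \<gamma>" unfolding \<gamma>_def using r by (intro gauge_ball_dependent) auto
  then show ?thesis
  proof (rule that)
    fix D t K assume D: "D tagged_division_of {a..b}" and "\<gamma> fine D" "(t, K) \<in> D" "t \<notin> N"
    then obtain p q where K: "K = {p..q}" "p \<le> t" "t \<le> q" "{p..q} \<subseteq> {a..b}"
      by (meson tagged_division_of_real_memE)
    then have "t \<in> {a..b} - N" using \<open>t \<notin> N\<close> by auto
    moreover have "K \<subseteq> \<gamma> t"
      using \<open>\<gamma> fine D\<close> \<open>(t, K) \<in> D\<close> by (auto simp: fine_def)
    ultimately have "K \<subseteq> ball t (r t)" unfolding \<gamma>_def by simp
    moreover have "p \<in> K" "q \<in> K" using K by auto
    ultimately have "dist p t < r t" "dist q t < r t"
      by (auto simp: dist_commute)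
    moreover have "\<forall>u\<in>{a..b}. \<forall>w\<in>{a..b}. w \<le> t \<longrightarrow> t \<le> u \<longrightarrow> dist u t < r t \<longrightarrow>
        dist w t < r t \<longrightarrow> norm (\<phi> u - \<phi> w) \<le> (M + e) * (u - w)"
      using r \<open>t \<in> {a..b} - N\<close> by blast
    ultimately have "norm (\<phi> q - \<phi> p) \<le> (M + e) * (q - p)"
      using K by auto
    then show "norm (\<phi> (Sup K) - \<phi> (Inf K)) \<le> (M + e) * (Sup K - Inf K)"
      using K by simp
  qed
qed

lemma negligible_fine_gauge:
  fixes a b :: real
  assumes "negligible N" "d > 0"
  obtains \<gamma> where "gauge \<gamma>"
    "\<And>D. D tagged_division_of {a..b} \<Longrightarrow> \<gamma> fine D \<Longrightarrow> (\<Sum>(t,K)\<in>{tK \<in> D. fst tK \<in> N}. Sup K - Inf K) < d"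
proof -
  \<comment> \<open>\<open>content\<close> must be qualified: unqualified, it denotes the content of a polynomial.\<close>
  have "(indicat_real N has_integral 0) (cbox a b)"
    using assms(1) unfolding negligible_def by blast
  then obtain \<gamma> where "gauge \<gamma>" and \<gamma>: "\<And>D. D tagged_division_of cbox a b \<Longrightarrow> \<gamma> fine D \<Longrightarrow>
      norm ((\<Sum>(t,K)\<in>D. Henstock_Kurzweil_Integration.content K *\<^sub>R indicat_real N t) - 0) < d"
    by (rule has_integralD[OF _ \<open>d > 0\<close>]) (rule that)
  show ?thesis
  proof (rule that[OF \<open>gauge \<gamma>\<close>])
    fix D assume D: "D tagged_division_of {a..b}" "\<gamma> fine D"
    have "finite D" using D(1) by blast
    have "Henstock_Kurzweil_Integration.content K = Sup K - Inf K" if tK: "(t, K) \<in> D" for t K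
    proof -
      obtain p q where "K = {p..q}" "p \<le> t" "t \<le> q"
        using tagged_division_of_real_memE[OF D(1) tK] by blast
      then show ?thesis by (simp add: content_real)
    qed
    then have "(\<Sum>(t,K)\<in>D. Henstock_Kurzweil_Integration.content K *\<^sub>R indicat_real N t)
        = (\<Sum>(t,K)\<in>D. if t \<in> N then Sup K - Inf K else 0)"
      by (intro sum.cong) auto
    also have "\<dots> = (\<Sum>(t,K)\<in>{tK \<in> D. fst tK \<in> N}. Sup K - Inf K)"
      using \<open>finite D\<close> by (simp add: sum.inter_filter split_beta)
    finally show "(\<Sum>(t,K)\<in>{tK \<in> D. fst tK \<in> N}. Sup K - Inf K) < d"
      using \<gamma>[OF D(1)[folded box_real(2)] D(2)] by (simp add: abs_less_iff)
  qed
qed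

lemma abs_continuous_on_norm_diff_le_approx:
  fixes \<phi> :: "real \<Rightarrow> 'a::real_normed_vector"
  assumes "a \<le> b" "abs_continuous_on {a..b} \<phi>" "negligible N" "0 \<le> M" "(e::real) > 0"
    and der: "\<And>t. t \<in> {a..b} - N \<Longrightarrow> \<exists>v. (\<phi> has_vector_derivative v) (at t within {a..b}) \<and> norm v \<le> M"
  shows "norm (\<phi> b - \<phi> a) \<le> (M + e) * (b - a) + e"
proof -
  \<comment> \<open>On a division fine for both gauges, tags outside \<open>N\<close> obey the derivative bound, while the
    intervals tagged in \<open>N\<close> have total length below \<open>d\<close>, so absolute continuity makes their
    contribution smaller than \<open>e\<close>.\<close>
  obtain d where "d > 0" and small: "\<And>D E. D tagged_division_of {a..b} \<Longrightarrow> E \<subseteq> D \<Longrightarrow>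
      (\<Sum>(t,K)\<in>E. Sup K - Inf K) < d \<Longrightarrow> (\<Sum>(t,K)\<in>E. norm (\<phi> (Sup K) - \<phi> (Inf K))) < e"
    by (rule abs_continuous_on_tagged_division_sum[OF assms(2) \<open>e > 0\<close>]) (rule that)
  obtain \<gamma>1 where "gauge \<gamma>1" and \<gamma>1: "\<And>D. D tagged_division_of {a..b} \<Longrightarrow> \<gamma>1 fine D \<Longrightarrow>
      (\<Sum>(t,K)\<in>{tK \<in> D. fst tK \<in> N}. Sup K - Inf K) < d"
    by (rule negligible_fine_gauge[OF \<open>negligible N\<close> \<open>d > 0\<close>]) (rule that)
  obtain \<gamma>2 where "gauge \<gamma>2" and \<gamma>2: "\<And>D t K. D tagged_division_of {a..b} \<Longrightarrow> \<gamma>2 fine D \<Longrightarrow>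
      (t, K) \<in> D \<Longrightarrow> t \<notin> N \<Longrightarrow> norm (\<phi> (Sup K) - \<phi> (Inf K)) \<le> (M + e) * (Sup K - Inf K)"
    by (rule derivative_bound_fine_gauge[where N = N, OF \<open>e > 0\<close> der], assumption) (rule that)
  obtain D where D: "D tagged_division_of {a..b}" and fine: "(\<lambda>t. \<gamma>1 t \<inter> \<gamma>2 t) fine D"
    using fine_division_exists_real[OF gauge_Int[OF \<open>gauge \<gamma>1\<close> \<open>gauge \<gamma>2\<close>]] by blast
  define E where "E = {tK \<in> D. fst tK \<in> N}"
  have "finite D" "E \<subseteq> D" using D unfolding E_def by auto
  have "norm (\<phi> b - \<phi> a) = norm (\<Sum>(t,K)\<in>D. \<phi> (Sup K) - \<phi> (Inf K))"
    using additive_tagged_division_1[OF \<open>a \<le> b\<close> D, of \<phi>] by simp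
  also have "\<dots> \<le> (\<Sum>(t,K)\<in>D. norm (\<phi> (Sup K) - \<phi> (Inf K)))"
    by (rule norm_sum[THEN order_trans]) (simp add: split_beta)
  also have "\<dots> = (\<Sum>(t,K)\<in>D - E. norm (\<phi> (Sup K) - \<phi> (Inf K))) + (\<Sum>(t,K)\<in>E. norm (\<phi> (Sup K) - \<phi> (Inf K)))"
    using sum.subset_diff[OF \<open>E \<subseteq> D\<close> \<open>finite D\<close>] by simp
  also have "\<dots> \<le> (M + e) * (b - a) + e"
  proof (rule add_mono)
    have "(\<Sum>(t,K)\<in>D - E. norm (\<phi> (Sup K) - \<phi> (Inf K))) \<le> (\<Sum>(t,K)\<in>D - E. (M + e) * (Sup K - Inf K))"
      using \<gamma>2[OF D] fine unfolding E_def fine_Int by (intro sum_mono) auto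
    also have "\<dots> \<le> (\<Sum>(t,K)\<in>D. (M + e) * (Sup K - Inf K))"
    proof (rule sum_mono2[OF \<open>finite D\<close>])
      fix tK assume "tK \<in> D - (D - E)"
      then obtain t K where tK: "tK = (t, K)" "(t, K) \<in> D" by (cases tK) auto
      then obtain p q where "K = {p..q}" "p \<le> t" "t \<le> q"
        using tagged_division_of_real_memE[OF D tK(2)] by blast
      then show "0 \<le> (case tK of (t, K) \<Rightarrow> (M + e) * (Sup K - Inf K))"
        using tK(1) \<open>0 \<le> M\<close> \<open>e > 0\<close> by simp
    qed auto
    also have "\<dots> = (M + e) * (b - a)"
      using additive_tagged_division_1[OF \<open>a \<le> b\<close> D, of "\<lambda>x. x"]
      by (simp add: sum_distrib_left[symmetric] split_beta)
    finally show "(\<Sum>(t,K)\<in>D - E. norm (\<phi> (Sup K) - \<phi> (Inf K))) \<le> (M + e) * (b - a)" .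
    show "(\<Sum>(t,K)\<in>E. norm (\<phi> (Sup K) - \<phi> (Inf K))) \<le> e"
      using small[OF D \<open>E \<subseteq> D\<close>] \<gamma>1[OF D] fine unfolding E_def fine_Int by simp
  qed
  finally show ?thesis .
qed

lemma abs_continuous_on_norm_diff_le:
  fixes \<phi> :: "real \<Rightarrow> 'a::real_normed_vector"
  assumes "a \<le> b" "abs_continuous_on {a..b} \<phi>" "negligible N" "0 \<le> M"
    and "\<And>t. t \<in> {a..b} - N \<Longrightarrow> \<exists>v. (\<phi> has_vector_derivative v) (at t within {a..b}) \<and> norm v \<le> M"
  shows "norm (\<phi> b - \<phi> a) \<le> M * (b - a)"
proof (rule field_le_epsilon)
  fix e :: real assume "e > 0"
  define \<epsilon> where "\<epsilon> = e / (b - a + 1)"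
  have "\<epsilon> > 0" using \<open>e > 0\<close> \<open>a \<le> b\<close> unfolding \<epsilon>_def by auto
  have "(M + \<epsilon>) * (b - a) + \<epsilon> = M * (b - a) + \<epsilon> * (b - a + 1)"
    by (simp add: algebra_simps)
  also have "\<epsilon> * (b - a + 1) = e"
    using \<open>a \<le> b\<close> unfolding \<epsilon>_def by simp
  finally have "(M + \<epsilon>) * (b - a) + \<epsilon> = M * (b - a) + e" .
  then show "norm (\<phi> b - \<phi> a) \<le> M * (b - a) + e"
    using abs_continuous_on_norm_diff_le_approx[OF assms(1-4) \<open>\<epsilon> > 0\<close> assms(5)] by simp
qed

section \<open>Inflated set-valued maps\<close>

lemma mem_inflate_iff:
  fixes F :: "'a::real_normed_vector \<Rightarrow> 'a set"
  assumes "0 \<le> eps x"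
  shows "v \<in> inflate F eps x \<longleftrightarrow> (\<exists>f\<in>F x. norm (v - f) \<le> eps x)"
proof
  assume "v \<in> inflate F eps x"
  then obtain f u where v: "v = f + eps x *\<^sub>R u" "f \<in> F x" "norm u \<le> 1"
    unfolding inflate_def by auto
  have "norm (v - f) = eps x * norm u"
    using v(1) assms by simp
  also have "\<dots> \<le> eps x"
    using v(3) assms by (simp add: mult_left_le)
  finally show "\<exists>f\<in>F x. norm (v - f) \<le> eps x"
    using v(2) by blast
next
  assume "\<exists>f\<in>F x. norm (v - f) \<le> eps x"
  then obtain f where f: "f \<in> F x" "norm (v - f) \<le> eps x" by blast
  show "v \<in> inflate F eps x"
  proof (cases "eps x = 0")
    case True
    then have "v = f + eps x *\<^sub>R 0" using f by simp
    then show ?thesis using f(1) unfolding inflate_def by force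
  next
    case False
    then have "v = f + eps x *\<^sub>R ((1 / eps x) *\<^sub>R (v - f))" by simp
    moreover have "(1 / eps x) *\<^sub>R (v - f) \<in> cball 0 1"
      using f(2) assms False by (simp add: divide_simps)
    ultimately show ?thesis using f(1) unfolding inflate_def by blast
  qed
qed

lemma inflate_mono:
  fixes F :: "'a::real_normed_vector \<Rightarrow> 'a set"
  assumes "0 \<le> eps x" "eps x \<le> eps' x"
  shows "inflate F eps x \<subseteq> inflate F eps' x"
proof
  fix v assume "v \<in> inflate F eps x"
  then obtain f where "f \<in> F x" "norm (v - f) \<le> eps x"
    using mem_inflate_iff[where eps = eps and x = x] assms(1) by blast
  then show "v \<in> inflate F eps' x"
    using mem_inflate_iff[where eps = eps' and x = x] assms by force
qed

lemma isCont_eventually_dist_less: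
  fixes f :: "'a::t2_space \<Rightarrow> 'b::metric_space"
  assumes "isCont f y" "e > 0"
  shows "eventually (\<lambda>x. dist (f x) (f y) < e) (nhds y)"
proof -
  have "(f \<longlongrightarrow> f y) (nhds y)"
    using assms(1) by (simp add: isCont_def tendsto_at_iff_tendsto_nhds)
  then show ?thesis
    using assms(2) unfolding tendsto_iff by blast
qed

lemma usc_at_eventually_close:
  fixes F :: "'a::metric_space \<Rightarrow> 'b::metric_space set"
  assumes "usc_at F y" "e > 0"
  shows "eventually (\<lambda>a. \<forall>f\<in>F a. \<exists>q\<in>F y. dist f q < e) (nhds y)"
proof -
  define U where "U = (\<Union>q\<in>F y. ball q e)"
  have "open U" "F y \<subseteq> U" unfolding U_def using \<open>e > 0\<close> by auto
  then obtain r where "r > 0" and r: "\<forall>a\<in>ball y r. F a \<subseteq> U"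
    using assms(1) unfolding usc_at_def by blast
  show ?thesis
    unfolding eventually_nhds_metric
  proof (intro exI[of _ r] conjI allI impI \<open>r > 0\<close>)
    fix a assume "dist a y < r"
    then have "F a \<subseteq> U" using r by (simp add: dist_commute)
    then show "\<forall>f\<in>F a. \<exists>q\<in>F y. dist f q < e"
      unfolding U_def by (force simp: dist_commute)
  qed
qed

lemma lsc_at_compact_eventually_close:
  fixes F :: "'a::metric_space \<Rightarrow> 'b::metric_space set"
  assumes "lsc_at F y" "compact (F y)" "e > 0"
  shows "eventually (\<lambda>b. \<forall>q\<in>F y. \<exists>g\<in>F b. dist q g < e) (nhds y)"
proof -
  have "F y \<subseteq> (\<Union>q\<in>F y. ball q (e/2))" using \<open>e > 0\<close> by force
  then obtain Q where Q: "Q \<subseteq> F y" "finite Q" "F y \<subseteq> (\<Union>q\<in>Q. ball q (e/2))"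
    using compactE_image[OF assms(2), of "F y" "\<lambda>q. ball q (e/2)"] by blast
  have "\<forall>q'\<in>Q. eventually (\<lambda>b. F b \<inter> ball q' (e/2) \<noteq> {}) (nhds y)"
  proof
    fix q' assume "q' \<in> Q"
    then have "F y \<inter> ball q' (e/2) \<noteq> {}" using Q(1) \<open>e > 0\<close> by auto
    then obtain r where "r > 0" "\<forall>b\<in>ball y r. F b \<inter> ball q' (e/2) \<noteq> {}"
      using assms(1) unfolding lsc_at_def by blast
    then show "eventually (\<lambda>b. F b \<inter> ball q' (e/2) \<noteq> {}) (nhds y)"
      unfolding eventually_nhds_metric by (auto simp: dist_commute)
  qed
  then have "eventually (\<lambda>b. \<forall>q'\<in>Q. F b \<inter> ball q' (e/2) \<noteq> {}) (nhds y)"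
    by (rule eventually_ball_finite[OF Q(2)])
  then show ?thesis
  proof (rule eventually_mono)
    fix b assume near: "\<forall>q'\<in>Q. F b \<inter> ball q' (e/2) \<noteq> {}"
    show "\<forall>q\<in>F y. \<exists>g\<in>F b. dist q g < e"
    proof
      fix q assume "q \<in> F y"
      then obtain q' where "q' \<in> Q" "q \<in> ball q' (e/2)" using Q(3) by blast
      moreover from \<open>q' \<in> Q\<close> have "F b \<inter> ball q' (e/2) \<noteq> {}" using near by blast
      then obtain g where g: "g \<in> F b" "g \<in> ball q' (e/2)" by blast
      ultimately have "dist q g < e"
        using dist_triangle[of q g q'] by (simp add: dist_commute)
      then show "\<exists>g\<in>F b. dist q g < e"
        using g(1) by blast
    qed
  qed
qed

lemma inflate_locally_bounded:
  fixes F :: "'a::real_normed_vector \<Rightarrow> 'a set"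
  assumes "usc_at F y" "bounded (F y)" "isCont eps y"
  obtains R M where "R > 0" "M > 0" "\<And>a v. a \<in> ball y R \<Longrightarrow> v \<in> inflate F eps a \<Longrightarrow> norm v \<le> M"
proof -
  obtain B where B: "\<forall>q\<in>F y. norm q \<le> B" using assms(2) unfolding bounded_iff by blast
  have "eventually (\<lambda>a. (\<forall>f\<in>F a. \<exists>q\<in>F y. dist f q < 1) \<and> dist (eps a) (eps y) < 1) (nhds y)"
    using usc_at_eventually_close[OF assms(1)] isCont_eventually_dist_less[OF assms(3)]
    by (intro eventually_conj) auto
  then obtain R where "R > 0" and R: "\<forall>a. dist a y < R \<longrightarrow>
      (\<forall>f\<in>F a. \<exists>q\<in>F y. dist f q < 1) \<and> dist (eps a) (eps y) < 1"
    unfolding eventually_nhds_metric by blast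
  show ?thesis
  proof (rule that[OF \<open>R > 0\<close>])
    show "\<bar>B\<bar> + \<bar>eps y\<bar> + 2 > 0" by simp
    fix a v assume "a \<in> ball y R" "v \<in> inflate F eps a"
    then obtain f u where v: "v = f + eps a *\<^sub>R u" "f \<in> F a" "norm u \<le> 1"
      unfolding inflate_def by auto
    have "dist a y < R" using \<open>a \<in> ball y R\<close> by (simp add: dist_commute)
    then have "\<forall>f\<in>F a. \<exists>q\<in>F y. dist f q < 1" "\<bar>eps a - eps y\<bar> < 1"
      using R by (auto simp: dist_real_def)
    then obtain q where "q \<in> F y" "dist f q < 1"
      using v(2) by blast
    then have "norm f \<le> B + 1"
      using B norm_triangle_ineq2[of f q] by (auto simp: dist_norm)
    moreover have "norm (eps a *\<^sub>R u) \<le> \<bar>eps y\<bar> + 1"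
      using \<open>\<bar>eps a - eps y\<bar> < 1\<close> \<open>norm u \<le> 1\<close> mult_mono[of "\<bar>eps a\<bar>" "\<bar>eps y\<bar> + 1" "norm u" 1]
      by simp
    ultimately show "norm v \<le> \<bar>B\<bar> + \<bar>eps y\<bar> + 2"
      unfolding v(1) using norm_triangle_ineq[of f "eps a *\<^sub>R u"] abs_ge_self[of B] by linarith
  qed
qed

lemma inflate_add_mem:
  fixes F :: "'a::real_normed_vector \<Rightarrow> 'a set"
  assumes "v \<in> inflate F eps a" "0 \<le> eps' b"
    and close: "\<And>f. f \<in> F a \<Longrightarrow> \<exists>g\<in>F b. norm (f - g) + \<bar>eps a\<bar> + norm w \<le> eps' b"
  shows "v + w \<in> inflate F eps' b"
proof -
  obtain f u where v: "v = f + eps a *\<^sub>R u" "f \<in> F a" "norm u \<le> 1"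
    using assms(1) unfolding inflate_def by auto
  obtain g where "g \<in> F b" and g: "norm (f - g) + \<bar>eps a\<bar> + norm w \<le> eps' b"
    using close[OF v(2)] by blast
  have "norm (eps a *\<^sub>R u) \<le> \<bar>eps a\<bar>"
    using v(3) mult_left_le[of "norm u" "\<bar>eps a\<bar>"] by simp
  have "norm (v + w - g) = norm ((f - g) + eps a *\<^sub>R u + w)"
    unfolding v(1) by (simp add: algebra_simps)
  also have "\<dots> \<le> norm ((f - g) + eps a *\<^sub>R u) + norm w"
    by (rule norm_triangle_ineq)
  also have "\<dots> \<le> norm (f - g) + norm (eps a *\<^sub>R u) + norm w"
    using norm_triangle_ineq[of "f - g" "eps a *\<^sub>R u"] by linarith
  finally have "norm (v + w - g) \<le> eps' b"
    using g \<open>norm (eps a *\<^sub>R u) \<le> \<bar>eps a\<bar>\<close> by linarith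
  then show ?thesis
    using \<open>g \<in> F b\<close> mem_inflate_iff[where eps = eps' and x = b] assms(2) by blast
qed

lemma inflate_absorbs_perturbation:
  fixes F :: "'a::real_normed_vector \<Rightarrow> 'a set"
  assumes "usc_at F y" "lsc_at F y" "compact (F y)" "isCont eps y" "isCont eps' y"
    and "0 \<le> eps y" "eps y < eps' y"
  obtains R \<delta> where "R > 0" "\<delta> > 0"
    "\<And>a b v w. a \<in> ball y R \<Longrightarrow> b \<in> ball y R \<Longrightarrow> v \<in> inflate F eps a \<Longrightarrow> norm w \<le> \<delta> \<Longrightarrow>
       v + w \<in> inflate F eps' b"
proof -
  define \<delta> where "\<delta> = (eps' y - eps y) / 4"
  have "\<delta> > 0" using assms(7) unfolding \<delta>_def by simp
  have "eventually (\<lambda>a. (\<forall>f\<in>F a. \<exists>q\<in>F y. dist f q < \<delta>/2) \<and> (\<forall>q\<in>F y. \<exists>g\<in>F a. dist q g < \<delta>/2) \<and>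
      dist (eps a) (eps y) < \<delta> \<and> dist (eps' a) (eps' y) < \<delta>) (nhds y)"
    using \<open>\<delta> > 0\<close> by (intro eventually_conj usc_at_eventually_close lsc_at_compact_eventually_close
        isCont_eventually_dist_less assms(1-5)) auto
  then obtain R where "R > 0" and R: "\<forall>a. dist a y < R \<longrightarrow>
      (\<forall>f\<in>F a. \<exists>q\<in>F y. dist f q < \<delta>/2) \<and> (\<forall>q\<in>F y. \<exists>g\<in>F a. dist q g < \<delta>/2) \<and>
      dist (eps a) (eps y) < \<delta> \<and> dist (eps' a) (eps' y) < \<delta>"
    unfolding eventually_nhds_metric by blast
  show ?thesis
  proof (rule that[OF \<open>R > 0\<close> \<open>\<delta> > 0\<close>])
    fix a b v and w :: 'a assume "a \<in> ball y R" "b \<in> ball y R" "v \<in> inflate F eps a" "norm w \<le> \<delta>"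
    then have near_a: "\<forall>f\<in>F a. \<exists>q\<in>F y. dist f q < \<delta>/2" "\<bar>eps a - eps y\<bar> < \<delta>"
      and near_b: "\<forall>q\<in>F y. \<exists>g\<in>F b. dist q g < \<delta>/2" "\<bar>eps' b - eps' y\<bar> < \<delta>"
      using R by (auto simp: dist_commute dist_real_def)
    have "eps' b > eps y + 3 * \<delta>"
      using near_b(2) abs_ge_minus_self[of "eps' b - eps' y"] unfolding \<delta>_def by argo
    show "v + w \<in> inflate F eps' b"
    proof (rule inflate_add_mem[OF \<open>v \<in> inflate F eps a\<close>])
      show "0 \<le> eps' b" using \<open>eps' b > eps y + 3 * \<delta>\<close> assms(6) \<open>\<delta> > 0\<close> by simp
      fix f assume "f \<in> F a"
      then obtain q where q: "q \<in> F y" "dist f q < \<delta>/2" using near_a(1) by blast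
      then obtain g where g: "g \<in> F b" "dist q g < \<delta>/2" using near_b(1) by blast
      have "norm (f - g) < \<delta>"
        using q(2) g(2) dist_triangle[of f g q] by (simp add: dist_norm)
      moreover have "\<bar>eps a\<bar> < eps y + \<delta>" using near_a(2) assms(6) by linarith
      ultimately show "\<exists>g\<in>F b. norm (f - g) + \<bar>eps a\<bar> + norm w \<le> eps' b"
        using g(1) \<open>norm w \<le> \<delta>\<close> \<open>eps' b > eps y + 3 * \<delta>\<close> by (intro bexI[of _ g]) linarith+
    qed
  qed
qed

section \<open>Steering solutions near a point\<close>

lemma ramp_lipschitz_on:
  fixes w :: "'a::real_normed_vector"
  assumes "h > 0"
  shows "(norm w / h)-lipschitz_on S (\<lambda>t. max 0 ((t - c) / h) *\<^sub>R w)"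
proof (rule lipschitz_onI)
  fix u v :: real
  have "\<bar>max 0 ((u - c) / h) - max 0 ((v - c) / h)\<bar> \<le> \<bar>(u - c) / h - (v - c) / h\<bar>"
    by (simp add: max_def abs_if)
  also have "\<dots> = dist u v / h"
    using assms by (simp add: dist_real_def diff_divide_distrib[symmetric])
  finally have ramp: "\<bar>max 0 ((u - c) / h) - max 0 ((v - c) / h)\<bar> \<le> dist u v / h" .
  have "dist (max 0 ((u - c) / h) *\<^sub>R w) (max 0 ((v - c) / h) *\<^sub>R w)
      = \<bar>max 0 ((u - c) / h) - max 0 ((v - c) / h)\<bar> * norm w"
    by (simp add: dist_norm flip: scaleR_left_diff_distrib)
  also have "\<dots> \<le> dist u v / h * norm w"
    using ramp by (rule mult_right_mono) simp
  finally show "dist (max 0 ((u - c) / h) *\<^sub>R w) (max 0 ((v - c) / h) *\<^sub>R w) \<le> norm w / h * dist u v"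
    by (simp add: algebra_simps)
qed (use assms in simp)

lemma has_vector_derivative_ramp:
  fixes w :: "'a::real_normed_vector"
  assumes "h > 0" "t \<noteq> c"
  shows "((\<lambda>t. max 0 ((t - c) / h) *\<^sub>R w) has_vector_derivative (if t < c then 0 else (1 / h) *\<^sub>R w))
    (at t within S)"
proof -
  have "((\<lambda>t. max 0 ((t - c) / h) *\<^sub>R w) has_vector_derivative (if t < c then 0 else (1 / h) *\<^sub>R w))
      (at t)"
  proof (cases "t < c")
    case True
    have "((\<lambda>t. max 0 ((t - c) / h) *\<^sub>R w) has_vector_derivative 0) (at t)"
    proof (rule has_vector_derivative_transform_within_open[OF has_vector_derivative_const open_lessThan])
      show "t \<in> {..<c}" using True by simp
      show "0 = max 0 ((x - c) / h) *\<^sub>R w" if "x \<in> {..<c}" for x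
        using that \<open>h > 0\<close> by (simp add: divide_le_0_iff)
    qed
    then show ?thesis using True by simp
  next
    case False
    then have "c < t" using \<open>t \<noteq> c\<close> by simp
    have "((\<lambda>t. (t - c) / h) has_field_derivative 1 / h) (at t)"
      using \<open>h > 0\<close> by (auto intro!: derivative_eq_intros)
    from has_vector_derivative_scaleR[OF this has_vector_derivative_const[of w]]
    have "((\<lambda>t. ((t - c) / h) *\<^sub>R w) has_vector_derivative (1 / h) *\<^sub>R w) (at t)" by simp
    then have "((\<lambda>t. max 0 ((t - c) / h) *\<^sub>R w) has_vector_derivative (1 / h) *\<^sub>R w) (at t)"
    proof (rule has_vector_derivative_transform_within_open[OF _ open_greaterThan])
      show "t \<in> {c<..}" using \<open>c < t\<close> by simp
      show "((x - c) / h) *\<^sub>R w = max 0 ((x - c) / h) *\<^sub>R w" if "x \<in> {c<..}" for x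
        using that \<open>h > 0\<close> by simp
    qed
    then show ?thesis using False by simp
  qed
  then show ?thesis by (rule has_vector_derivative_at_within)
qed

lemma is_solution_atLeastAtMost_subset:
  assumes "is_solution G I \<phi>" "p \<in> I" "q \<in> I"
  shows "{p..q} \<subseteq> I"
proof
  fix x assume "x \<in> {p..q}"
  moreover have "is_interval I" using assms(1) by (simp add: is_solution_def)
  ultimately show "x \<in> I"
    using assms(2,3) unfolding is_interval_1 by (metis atLeastAtMost_iff)
qed

lemma is_solution_abs_continuous_on:
  assumes "is_solution G I \<phi>" "p \<in> I" "q \<in> I"
  shows "abs_continuous_on {p..q} \<phi>"
  using assms(1) is_solution_atLeastAtMost_subset[OF assms]
  unfolding is_solution_def loc_abs_continuous_on_def by blast

lemma loc_abs_continuous_on_add_ramp: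
  fixes \<phi> :: "real \<Rightarrow> 'a::real_normed_vector"
  assumes "loc_abs_continuous_on I \<phi>" "J \<subseteq> I" "h > 0"
  shows "loc_abs_continuous_on J (\<lambda>t. \<phi> t + max 0 ((t - c) / h) *\<^sub>R w)"
  unfolding loc_abs_continuous_on_def
proof (intro allI impI)
  fix p q assume "{p..q} \<subseteq> J"
  then have "abs_continuous_on {p..q} \<phi>"
    using assms(1,2) unfolding loc_abs_continuous_on_def by blast
  moreover have "abs_continuous_on {p..q} (\<lambda>t. max 0 ((t - c) / h) *\<^sub>R w)"
    by (rule lipschitz_on_imp_abs_continuous_on[OF ramp_lipschitz_on[OF \<open>h > 0\<close>]])
  ultimately show "abs_continuous_on {p..q} (\<lambda>t. \<phi> t + max 0 ((t - c) / h) *\<^sub>R w)"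
    by (rule abs_continuous_on_add)
qed

lemma continuous_on_last_exit:
  fixes \<phi> :: "real \<Rightarrow> 'a::topological_space"
  assumes "continuous_on {a..b} \<phi>" "a \<le> b" "open U" "\<phi> a \<notin> U"
  obtains t0 where "a \<le> t0" "t0 \<le> b" "\<phi> t0 \<notin> U" "\<And>t. t0 < t \<Longrightarrow> t \<le> b \<Longrightarrow> \<phi> t \<in> U"
proof -
  define S where "S = {a..b} \<inter> \<phi> -` (- U)"
  have "closed S"
    unfolding S_def using assms(1,3) by (intro continuous_closed_preimage) auto
  moreover have "a \<in> S" "bdd_above S"
    using assms(2,4) unfolding S_def by (auto intro: bdd_aboveI[of _ b])
  ultimately have "Sup S \<in> S"
    using closed_contains_Sup by blast
  then have t0: "a \<le> Sup S" "Sup S \<le> b" "\<phi> (Sup S) \<notin> U"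
    unfolding S_def by auto
  show ?thesis
  proof (rule that[OF t0])
    fix t assume "Sup S < t" "t \<le> b"
    show "\<phi> t \<in> U"
    proof (rule ccontr)
      assume "\<phi> t \<notin> U"
      then have "t \<in> S" unfolding S_def using \<open>Sup S < t\<close> \<open>t \<le> b\<close> t0(1) by auto
      then have "t \<le> Sup S" by (rule cSup_upper[OF _ \<open>bdd_above S\<close>])
      then show False using \<open>Sup S < t\<close> by simp
    qed
  qed
qed

lemma solution_ramp_perturbation:
  fixes \<phi> :: "real \<Rightarrow> 'a::euclidean_space" and G H :: "'a \<Rightarrow> 'a set"
  assumes sol: "is_solution G I \<phi>" and sub: "\<And>x. G x \<subseteq> H x"
    and "s \<in> I" "0 \<le> c" "c < s"
    and perturb: "\<And>t v. t \<in> I \<Longrightarrow> c < t \<Longrightarrow> t \<le> s \<Longrightarrow> v \<in> G (\<phi> t) \<Longrightarrow>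
       v + (1 / (s - c)) *\<^sub>R w \<in> H (\<phi> t + ((t - c) / (s - c)) *\<^sub>R w)"
  shows "is_solution H (I \<inter> {..s}) (\<lambda>t. \<phi> t + max 0 ((t - c) / (s - c)) *\<^sub>R w)"
proof -
  define h where "h = s - c"
  define \<psi> where "\<psi> t = \<phi> t + max 0 ((t - c) / h) *\<^sub>R w" for t
  define J where "J = I \<inter> {..s}"
  have "h > 0" "J \<subseteq> I" using \<open>c < s\<close> unfolding h_def J_def by auto
  have "is_interval I" "0 \<in> I" "loc_abs_continuous_on I \<phi>"
    and "\<exists>N\<in>null_sets lebesgue. \<forall>t\<in>I - N. \<exists>v. (\<phi> has_vector_derivative v) (at t within I) \<and> v \<in> G (\<phi> t)"
    using sol by (simp_all add: is_solution_def)
  then obtain N where "N \<in> null_sets lebesgue"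
    and der: "\<forall>t\<in>I - N. \<exists>v. (\<phi> has_vector_derivative v) (at t within I) \<and> v \<in> G (\<phi> t)"
    by blast
  have "is_solution H J \<psi>"
    unfolding is_solution_def
  proof (intro conjI)
    show "is_interval J" unfolding J_def by (intro is_interval_Int \<open>is_interval I\<close> is_interval_ic)
    show "0 \<in> J" unfolding J_def using \<open>0 \<in> I\<close> \<open>0 \<le> c\<close> \<open>c < s\<close> by simp
    show "loc_abs_continuous_on J \<psi>" unfolding \<psi>_def
      by (rule loc_abs_continuous_on_add_ramp[OF \<open>loc_abs_continuous_on I \<phi>\<close> \<open>J \<subseteq> I\<close> \<open>h > 0\<close>])
    show "\<exists>N\<in>null_sets lebesgue. \<forall>t\<in>J - N. \<exists>v. (\<psi> has_vector_derivative v) (at t within J) \<and> v \<in> H (\<psi> t)"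
    proof (intro bexI ballI)
      show "N \<union> {c} \<in> null_sets lebesgue"
        using \<open>N \<in> null_sets lebesgue\<close> by (simp add: negligible_iff_null_sets[symmetric])
      fix t assume "t \<in> J - (N \<union> {c})"
      then have "t \<in> I - N" "t \<le> s" "t \<noteq> c" unfolding J_def by auto
      then obtain v where v: "(\<phi> has_vector_derivative v) (at t within I)" "v \<in> G (\<phi> t)"
        using der by blast
      let ?v' = "v + (if t < c then 0 else (1 / h) *\<^sub>R w)"
      have "(\<psi> has_vector_derivative ?v') (at t within J)"
        unfolding \<psi>_def using has_vector_derivative_within_subset[OF v(1) \<open>J \<subseteq> I\<close>]
        by (intro has_vector_derivative_add has_vector_derivative_ramp \<open>h > 0\<close> \<open>t \<noteq> c\<close>)
      moreover have "?v' \<in> H (\<psi> t)"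
      proof (cases "t < c")
        case True
        then have "\<psi> t = \<phi> t" unfolding \<psi>_def using \<open>h > 0\<close> by (simp add: divide_le_0_iff)
        then show ?thesis using True v(2) sub by auto
      next
        case False
        then have "c < t" using \<open>t \<noteq> c\<close> by simp
        then have "\<psi> t = \<phi> t + ((t - c) / h) *\<^sub>R w" unfolding \<psi>_def using \<open>h > 0\<close> by simp
        then show ?thesis
          using False perturb[OF _ \<open>c < t\<close> \<open>t \<le> s\<close> v(2)] \<open>t \<in> I - N\<close> unfolding h_def by simp
      qed
      ultimately show "\<exists>v. (\<psi> has_vector_derivative v) (at t within J) \<and> v \<in> H (\<psi> t)" by blast
    qed
  qed
  then show ?thesis unfolding \<psi>_def J_def h_def .
qed

lemma solution_norm_diff_le:
  fixes \<phi> :: "real \<Rightarrow> 'a::euclidean_space"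
  assumes sol: "is_solution G I \<phi>" and "t0 \<in> I" "s \<in> I" "t0 \<le> s" "0 \<le> M"
    and bound: "\<And>t v. t0 < t \<Longrightarrow> t \<le> s \<Longrightarrow> v \<in> G (\<phi> t) \<Longrightarrow> norm v \<le> M"
  shows "norm (\<phi> s - \<phi> t0) \<le> M * (s - t0)"
proof -
  obtain N where "N \<in> null_sets lebesgue"
    and der: "\<forall>t\<in>I - N. \<exists>v. (\<phi> has_vector_derivative v) (at t within I) \<and> v \<in> G (\<phi> t)"
    using sol unfolding is_solution_def by blast
  have "{t0..s} \<subseteq> I" by (rule is_solution_atLeastAtMost_subset[OF sol \<open>t0 \<in> I\<close> \<open>s \<in> I\<close>])
  show ?thesis
  proof (rule abs_continuous_on_norm_diff_le[OF \<open>t0 \<le> s\<close> _ _ \<open>0 \<le> M\<close>])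
    show "abs_continuous_on {t0..s} \<phi>"
      by (rule is_solution_abs_continuous_on[OF sol \<open>t0 \<in> I\<close> \<open>s \<in> I\<close>])
    show "negligible (N \<union> {t0})"
      using \<open>N \<in> null_sets lebesgue\<close> by (simp add: negligible_iff_null_sets)
    fix t assume t: "t \<in> {t0..s} - (N \<union> {t0})"
    then obtain v where v: "(\<phi> has_vector_derivative v) (at t within I)" "v \<in> G (\<phi> t)"
      using der \<open>{t0..s} \<subseteq> I\<close> by blast
    moreover have "norm v \<le> M" using bound[OF _ _ v(2)] t by auto
    ultimately show "\<exists>v. (\<phi> has_vector_derivative v) (at t within {t0..s}) \<and> norm v \<le> M"
      using has_vector_derivative_within_subset[OF _ \<open>{t0..s} \<subseteq> I\<close>] by blast
  qed
qed

lemma solution_dwell_time: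
  fixes \<phi> :: "real \<Rightarrow> 'a::euclidean_space"
  assumes sol: "is_solution G I \<phi>" and "s \<in> I" "0 \<le> s" "\<phi> 0 \<notin> ball y R" "0 \<le> M"
    and bound: "\<forall>x\<in>ball y R. \<forall>v\<in>G x. norm v \<le> M"
  obtains t0 where "0 \<le> t0" "t0 \<le> s" "R - dist y (\<phi> s) \<le> M * (s - t0)"
    "\<And>t. t0 < t \<Longrightarrow> t \<le> s \<Longrightarrow> \<phi> t \<in> ball y R"
proof -
  have "0 \<in> I" using sol by (simp add: is_solution_def)
  have cont: "continuous_on {0..s} \<phi>"
    by (rule abs_continuous_on_imp_continuous_on[OF is_solution_abs_continuous_on[OF sol \<open>0 \<in> I\<close> \<open>s \<in> I\<close>]])
  obtain t0 where t0: "0 \<le> t0" "t0 \<le> s" "\<phi> t0 \<notin> ball y R"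
    and inside: "\<And>t. t0 < t \<Longrightarrow> t \<le> s \<Longrightarrow> \<phi> t \<in> ball y R"
    by (rule continuous_on_last_exit[OF cont \<open>0 \<le> s\<close> open_ball \<open>\<phi> 0 \<notin> ball y R\<close>]) (rule that)
  have "t0 \<in> I"
    using is_solution_atLeastAtMost_subset[OF sol \<open>0 \<in> I\<close> \<open>s \<in> I\<close>] t0(1,2) by auto
  have "norm (\<phi> s - \<phi> t0) \<le> M * (s - t0)"
    using inside bound by (intro solution_norm_diff_le[OF sol \<open>t0 \<in> I\<close> \<open>s \<in> I\<close> t0(2) \<open>0 \<le> M\<close>]) blast
  moreover have "R \<le> dist y (\<phi> t0)" using t0(3) by simp
  moreover have "dist y (\<phi> t0) \<le> dist y (\<phi> s) + norm (\<phi> s - \<phi> t0)"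
    using dist_triangle[of y "\<phi> t0" "\<phi> s"] by (simp add: dist_norm)
  ultimately have "R - dist y (\<phi> s) \<le> M * (s - t0)" by linarith
  then show ?thesis using that t0(1,2) inside by blast
qed

lemma solution_time_in_ball:
  fixes \<phi> :: "real \<Rightarrow> 'a::euclidean_space"
  assumes sol: "is_solution G I \<phi>" and bound: "\<forall>x\<in>ball y R. \<forall>v\<in>G x. norm v \<le> M"
    and "0 < M" "\<phi> 0 \<notin> ball y R" "s \<in> I" "0 \<le> s" "dist y (\<phi> s) \<le> R / 2"
  obtains c where "0 \<le> c" "s - c = R / (2 * M)" "\<And>t. c < t \<Longrightarrow> t \<le> s \<Longrightarrow> \<phi> t \<in> ball y R"
proof -
  obtain t0 where "0 \<le> t0" "t0 \<le> s" and dwell: "R - dist y (\<phi> s) \<le> M * (s - t0)"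
    and inside: "\<And>t. t0 < t \<Longrightarrow> t \<le> s \<Longrightarrow> \<phi> t \<in> ball y R"
    by (rule solution_dwell_time[OF sol \<open>s \<in> I\<close> \<open>0 \<le> s\<close> \<open>\<phi> 0 \<notin> ball y R\<close>
        less_imp_le[OF \<open>0 < M\<close>] bound]) (rule that)
  have "R / 2 \<le> M * (s - t0)" using dwell \<open>dist y (\<phi> s) \<le> R / 2\<close> by simp
  then have "R / (2 * M) \<le> s - t0" using \<open>0 < M\<close> by (simp add: field_simps)
  then show ?thesis
    using that[of "s - R / (2 * M)"] inside \<open>0 \<le> t0\<close> by simp
qed

lemma solution_steer_near_point:
  fixes \<phi> :: "real \<Rightarrow> 'a::euclidean_space" and G H :: "'a \<Rightarrow> 'a set"
  assumes sol: "is_solution G I \<phi>" and sub: "\<And>x. G x \<subseteq> H x"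
    and bound: "\<forall>a\<in>ball y R. \<forall>v\<in>G a. norm v \<le> M"
    and absorb: "\<And>a b v w. a \<in> ball y (2 * R) \<Longrightarrow> b \<in> ball y (2 * R) \<Longrightarrow> v \<in> G a \<Longrightarrow> norm w \<le> \<delta> \<Longrightarrow>
       v + w \<in> H b"
    and "0 < M" "0 < \<rho>" "\<rho> \<le> R / 2" "\<rho> \<le> \<delta> * R / (4 * M)"
    and "\<phi> 0 \<notin> ball y R" "s \<in> I" "0 \<le> s" "\<phi> s \<in> ball y \<rho>" "y' \<in> ball y \<rho>"
  shows "\<exists>J \<psi>. is_solution H J \<psi> \<and> \<psi> 0 = \<phi> 0 \<and> s \<in> J \<and> \<psi> s = y'"
proof -
  have "R > 0" using \<open>0 < \<rho>\<close> \<open>\<rho> \<le> R / 2\<close> by simp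
  have "dist y (\<phi> s) \<le> R / 2" using \<open>\<phi> s \<in> ball y \<rho>\<close> \<open>\<rho> \<le> R / 2\<close> by simp
  then obtain c where "0 \<le> c" and h: "s - c = R / (2 * M)"
    and inside: "\<And>t. c < t \<Longrightarrow> t \<le> s \<Longrightarrow> \<phi> t \<in> ball y R"
    by (rule solution_time_in_ball[OF sol bound \<open>0 < M\<close> \<open>\<phi> 0 \<notin> ball y R\<close> \<open>s \<in> I\<close> \<open>0 \<le> s\<close>]) (rule that)
  have "R / (2 * M) > 0" using \<open>R > 0\<close> \<open>0 < M\<close> by simp
  then have "c < s" using h by linarith
  define w where "w = y' - \<phi> s"
  have "norm w < 2 * \<rho>"
    using dist_triangle[of y' "\<phi> s" y] \<open>\<phi> s \<in> ball y \<rho>\<close> \<open>y' \<in> ball y \<rho>\<close>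
    unfolding w_def by (simp add: dist_norm norm_minus_commute)
  have "norm ((1 / (s - c)) *\<^sub>R w) \<le> \<delta>"
  proof -
    have "norm ((1 / (s - c)) *\<^sub>R w) = norm w * (2 * M) / R"
      unfolding h using \<open>R > 0\<close> \<open>0 < M\<close> by simp
    also have "\<dots> \<le> 2 * \<rho> * (2 * M) / R"
      using \<open>norm w < 2 * \<rho>\<close> \<open>0 < M\<close> \<open>R > 0\<close> by (intro divide_right_mono mult_right_mono) auto
    also have "\<dots> \<le> \<delta>"
      using \<open>\<rho> \<le> \<delta> * R / (4 * M)\<close> \<open>0 < M\<close> \<open>R > 0\<close> by (simp add: field_simps)
    finally show ?thesis .
  qed
  have "is_solution H (I \<inter> {..s}) (\<lambda>t. \<phi> t + max 0 ((t - c) / (s - c)) *\<^sub>R w)"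
  proof (rule solution_ramp_perturbation[OF sol sub \<open>s \<in> I\<close> \<open>0 \<le> c\<close> \<open>c < s\<close>])
    fix t v assume "t \<in> I" "c < t" "t \<le> s" "v \<in> G (\<phi> t)"
    have "\<phi> t \<in> ball y R" using inside \<open>c < t\<close> \<open>t \<le> s\<close> by simp
    have "0 \<le> (t - c) / (s - c)" "(t - c) / (s - c) \<le> 1"
      using \<open>c < t\<close> \<open>t \<le> s\<close> by (simp_all add: divide_le_eq)
    then have "norm (((t - c) / (s - c)) *\<^sub>R w) \<le> norm w"
      unfolding norm_scaleR abs_of_nonneg[OF \<open>0 \<le> (t - c) / (s - c)\<close>]
      by (rule mult_left_le_one_le[OF norm_ge_zero])
    then have "\<phi> t + ((t - c) / (s - c)) *\<^sub>R w \<in> ball y (2 * R)"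
      using dist_triangle[of y "\<phi> t + ((t - c) / (s - c)) *\<^sub>R w" "\<phi> t"] \<open>\<phi> t \<in> ball y R\<close>
        \<open>norm w < 2 * \<rho>\<close> \<open>\<rho> \<le> R / 2\<close> by (simp add: dist_norm)
    moreover have "\<phi> t \<in> ball y (2 * R)" using \<open>\<phi> t \<in> ball y R\<close> \<open>R > 0\<close> by simp
    ultimately show "v + (1 / (s - c)) *\<^sub>R w \<in> H (\<phi> t + ((t - c) / (s - c)) *\<^sub>R w)"
      using absorb[OF _ _ \<open>v \<in> G (\<phi> t)\<close> \<open>norm ((1 / (s - c)) *\<^sub>R w) \<le> \<delta>\<close>] by simp
  qed
  moreover have "max 0 ((0 - c) / (s - c)) = 0" "max 0 ((s - c) / (s - c)) = 1"
    using \<open>0 \<le> c\<close> \<open>c < s\<close> by (auto simp: divide_le_0_iff)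
  ultimately show ?thesis
    using \<open>s \<in> I\<close> unfolding w_def
    by (intro exI[of _ "I \<inter> {..s}"] exI[of _ "\<lambda>t. \<phi> t + max 0 ((t - c) / (s - c)) *\<^sub>R w"] conjI)
      (simp_all add: w_def)
qed

lemma inflate_steering_radius:
  fixes F :: "'a::euclidean_space \<Rightarrow> 'a set"
  assumes "usc_at F y" "lsc_at F y" "compact (F y)" "isCont eps y" "isCont eps' y"
    and "\<And>x. 0 \<le> eps x" "\<And>x. eps x < eps' x" "r > 0"
  obtains \<rho> where "\<rho> > 0"
    "\<And>I \<phi> s y'. is_solution (inflate F eps) I \<phi> \<Longrightarrow> \<phi> 0 \<notin> ball y r \<Longrightarrow> s \<in> I \<Longrightarrow> 0 \<le> s \<Longrightarrow>
       \<phi> s \<in> ball y \<rho> \<Longrightarrow> y' \<in> ball y \<rho> \<Longrightarrow>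
       \<exists>J \<psi>. is_solution (inflate F eps') J \<psi> \<and> \<psi> 0 = \<phi> 0 \<and> s \<in> J \<and> \<psi> s = y'"
proof -
  obtain R0 M where "R0 > 0" "M > 0" and bound: "\<And>a v. a \<in> ball y R0 \<Longrightarrow> v \<in> inflate F eps a \<Longrightarrow> norm v \<le> M"
    by (rule inflate_locally_bounded[OF assms(1) compact_imp_bounded[OF assms(3)] assms(4)]) (rule that)
  obtain R1 \<delta> where "R1 > 0" "\<delta> > 0" and absorb: "\<And>a b v w. a \<in> ball y R1 \<Longrightarrow> b \<in> ball y R1 \<Longrightarrow>
      v \<in> inflate F eps a \<Longrightarrow> norm w \<le> \<delta> \<Longrightarrow> v + w \<in> inflate F eps' b"
    by (rule inflate_absorbs_perturbation[OF assms(1-5) assms(6) assms(7)]) (rule that)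
  define R where "R = min (min R0 (R1 / 2)) r"
  define \<rho> where "\<rho> = min (R / 2) (\<delta> * R / (4 * M))"
  have "R > 0" unfolding R_def using \<open>R0 > 0\<close> \<open>R1 > 0\<close> \<open>r > 0\<close> by simp
  then have "\<rho> > 0" "\<rho> \<le> R / 2" "\<rho> \<le> \<delta> * R / (4 * M)"
    unfolding \<rho>_def using \<open>\<delta> > 0\<close> \<open>M > 0\<close> by auto
  have sub: "inflate F eps x \<subseteq> inflate F eps' x" for x
    using assms(6,7)[of x] by (intro inflate_mono) auto
  show ?thesis
  proof (rule that[OF \<open>\<rho> > 0\<close>])
    fix I \<phi> s y' assume sol: "is_solution (inflate F eps) I \<phi>" and "\<phi> 0 \<notin> ball y r"
      and "s \<in> I" "0 \<le> s" "\<phi> s \<in> ball y \<rho>" "y' \<in> ball y \<rho>"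
    show "\<exists>J \<psi>. is_solution (inflate F eps') J \<psi> \<and> \<psi> 0 = \<phi> 0 \<and> s \<in> J \<and> \<psi> s = y'"
    proof (rule solution_steer_near_point[OF sol sub _ _ \<open>M > 0\<close> \<open>\<rho> > 0\<close> \<open>\<rho> \<le> R / 2\<close>
          \<open>\<rho> \<le> \<delta> * R / (4 * M)\<close> _ \<open>s \<in> I\<close> \<open>0 \<le> s\<close> \<open>\<phi> s \<in> ball y \<rho>\<close> \<open>y' \<in> ball y \<rho>\<close>])
      show "\<forall>a\<in>ball y R. \<forall>v\<in>inflate F eps a. norm v \<le> M"
        using bound unfolding R_def by auto
      show "v + w \<in> inflate F eps' b"
        if "a \<in> ball y (2 * R)" "b \<in> ball y (2 * R)" "v \<in> inflate F eps a" "norm w \<le> \<delta>" for a b v w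
      proof -
        have "2 * R \<le> R1" unfolding R_def by simp
        then show ?thesis using absorb[OF _ _ that(3,4)] that(1,2) by simp
      qed
      show "\<phi> 0 \<notin> ball y R"
        using \<open>\<phi> 0 \<notin> ball y r\<close> unfolding R_def by auto
    qed
  qed
qed

lemma Kset_memE:
  assumes "z \<in> Kset F eps Xo"
  obtains I \<phi> s where "is_solution (inflate F eps) I \<phi>" "\<phi> 0 \<in> Xo" "s \<in> I" "0 \<le> s" "\<phi> s = z"
proof -
  obtain t x where "x \<in> Xo" "z \<in> reach (inflate F eps) t x"
    using assms unfolding Kset_def by blast
  then obtain I \<phi> s where "is_maximal_solution (inflate F eps) I \<phi>" "\<phi> 0 = x" "s \<in> I" "0 \<le> s" "z = \<phi> s"
    unfolding reach_def by auto
  then show ?thesis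
    using that \<open>x \<in> Xo\<close> unfolding is_maximal_solution_def by auto
qed

lemma closure_Kset_inter_closure_subset:
  fixes F :: "'a::euclidean_space \<Rightarrow> 'a set"
  assumes F: "setvalued_continuous F" "\<And>x. compact (F x)"
    and margin: "robust_safety_margin F Xo Xu eps_o"
    and eps: "continuous_on UNIV eps" "\<And>x. eps x > 0" "\<And>x. eps x < eps_o x"
  shows "closure (Kset F eps Xo) \<inter> closure Xu \<subseteq> closure Xo"
proof
  fix y assume "y \<in> closure (Kset F eps Xo) \<inter> closure Xu"
  then have y: "y \<in> closure (Kset F eps Xo)" "y \<in> closure Xu" by auto
  show "y \<in> closure Xo"
  proof (rule ccontr)
    assume "y \<notin> closure Xo"
    then obtain r where "r > 0" "ball y r \<subseteq> - closure Xo"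
      using open_contains_ball[of "- closure Xo"] by blast
    then have avoid: "x \<notin> ball y r" if "x \<in> Xo" for x
      using that closure_subset by blast
    have "continuous_on UNIV eps_o" and safe: "safe (inflate F eps_o) Xo Xu"
      using margin unfolding robust_safety_margin_def by auto
    then have "isCont eps y" "isCont eps_o y"
      using eps(1) by (simp_all add: continuous_on_eq_continuous_at)
    have "usc_at F y" "lsc_at F y"
      using F(1) unfolding setvalued_continuous_def by auto
    obtain \<rho> where "\<rho> > 0" and steer: "\<And>I \<phi> s y'. is_solution (inflate F eps) I \<phi> \<Longrightarrow>
        \<phi> 0 \<notin> ball y r \<Longrightarrow> s \<in> I \<Longrightarrow> 0 \<le> s \<Longrightarrow> \<phi> s \<in> ball y \<rho> \<Longrightarrow> y' \<in> ball y \<rho> \<Longrightarrow>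
        \<exists>J \<psi>. is_solution (inflate F eps_o) J \<psi> \<and> \<psi> 0 = \<phi> 0 \<and> s \<in> J \<and> \<psi> s = y'"
      by (rule inflate_steering_radius[OF \<open>usc_at F y\<close> \<open>lsc_at F y\<close> F(2) \<open>isCont eps y\<close> \<open>isCont eps_o y\<close>
          less_imp_le[OF eps(2)] eps(3) \<open>r > 0\<close>]) (rule that)
    obtain z where "z \<in> Kset F eps Xo" "dist z y < \<rho>"
      using y(1) \<open>\<rho> > 0\<close> unfolding closure_approachable by blast
    obtain I \<phi> s where sol: "is_solution (inflate F eps) I \<phi>" and "\<phi> 0 \<in> Xo"
      and "s \<in> I" "0 \<le> s" "\<phi> s = z"
      by (rule Kset_memE[OF \<open>z \<in> Kset F eps Xo\<close>]) (rule that)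
    have "\<phi> 0 \<notin> ball y r" using avoid \<open>\<phi> 0 \<in> Xo\<close> by simp
    obtain y' where "y' \<in> Xu" "dist y' y < \<rho>"
      using y(2) \<open>\<rho> > 0\<close> unfolding closure_approachable by blast
    have "\<phi> s \<in> ball y \<rho>" "y' \<in> ball y \<rho>"
      using \<open>dist z y < \<rho>\<close> \<open>\<phi> s = z\<close> \<open>dist y' y < \<rho>\<close> by (simp_all add: dist_commute)
    then obtain J \<psi> where "is_solution (inflate F eps_o) J \<psi>" "\<psi> 0 = \<phi> 0" "s \<in> J" "\<psi> s = y'"
      using steer[OF sol \<open>\<phi> 0 \<notin> ball y r\<close> \<open>s \<in> I\<close> \<open>0 \<le> s\<close>] by blast
    moreover have "\<psi> 0 \<in> Xo" using \<open>\<psi> 0 = \<phi> 0\<close> \<open>\<phi> 0 \<in> Xo\<close> by simp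
    ultimately have "\<psi> s \<notin> Xu"
      using safe \<open>0 \<le> s\<close> unfolding safe_def by blast
    then show False using \<open>\<psi> s = y'\<close> \<open>y' \<in> Xu\<close> by simp
  qed
qed

theorem lemma9:
  fixes F :: "real^'n \<Rightarrow> (real^'n) set"
    and Xo Xu :: "(real^'n) set"
    and eps_o :: "real^'n \<Rightarrow> real"
  assumes "setvalued_continuous F"
    and "\<And>x. F x \<noteq> {} \<and> compact (F x) \<and> convex (F x)"
    and "forward_complete F"
    and "robust_safety_margin F Xo Xu eps_o"
  shows "\<forall>eps. continuous_on UNIV eps \<and> (\<forall>x. eps x > 0) \<and> (\<forall>x. eps x < eps_o x) \<longrightarrow>
           ((closure Xo \<inter> closure Xu = {} \<longrightarrow> closure Xu \<inter> closure (Kset F eps Xo) = {}) \<and>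
            (closure Xo \<inter> Xu = {} \<longrightarrow> Xu \<inter> closure (Kset F eps Xo) = {}))"
proof (intro allI impI)
  fix eps :: "real^'n \<Rightarrow> real"
  assume "continuous_on UNIV eps \<and> (\<forall>x. eps x > 0) \<and> (\<forall>x. eps x < eps_o x)"
  then have K: "closure (Kset F eps Xo) \<inter> closure Xu \<subseteq> closure Xo"
    using assms(2,4) by (intro closure_Kset_inter_closure_subset[OF assms(1)]) auto
  show "(closure Xo \<inter> closure Xu = {} \<longrightarrow> closure Xu \<inter> closure (Kset F eps Xo) = {}) \<and>
        (closure Xo \<inter> Xu = {} \<longrightarrow> Xu \<inter> closure (Kset F eps Xo) = {})"
    using K closure_subset[of Xu] by blast
qed

end
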